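(* Let $n\ge1$, $k>\ell\ge1$ and $s\ge1$ be integers, $d=\gcd(s,n)$, and $C=\{0,s\}\subseteq\mathbb{Z}/n\mathbb{Z}$. Let $A\subseteq\mathbb{Z}/n\mathbb{Z}$ be $C$-$(k,\ell)$-sum-free and let $K=\mathrm{stab}(k *_C A)$. If $K$ does not contain the cyclic subgroup $\langle d\rangle$ of $\mathbb{Z}/n\mathbb{Z}$ generated by $d$, then $|A|\le\left\lfloor\frac{n}{k+\ell}\right\rfloor$.
   Context: For subsets $X,Y$ of an abelian group, $X+Y=\{x+y: x\in X, y\in Y\}$, and for an integer $j\ge 1$, $jX=X+\dots+X$ ($j$ copies); $0X=\{0\}$. For $A,C\subseteq \mathbb{Z}/n\mathbb{Z}$ and an integer $j\ge 1$, define $j *_C A = jA+(j-1)C$. A set $A\subseteq\mathbb{Z}/n\mathbb{Z}$ is $C$-$(k,\ell)$-sum-free if $(k *_C A)\cap(\ell *_C A)=\emptyset$. The stabilizer of $X\subseteq \mathbb{Z}/n\mathbb{Z}$ is $\mathrm{stab}(X)=\{g: g+X=X\}$. *)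

theory Defs
  imports Main
begin

text \<open>Z/nZ is modelled by the residues {0..<n} of type nat, with addition mod n.\<close>

definition zmod_sumset :: "nat \<Rightarrow> nat set \<Rightarrow> nat set \<Rightarrow> nat set" where
  "zmod_sumset n X Y = {(x + y) mod n | x y. x \<in> X \<and> y \<in> Y}"

fun zmod_iter_sum :: "nat \<Rightarrow> nat \<Rightarrow> nat set \<Rightarrow> nat set" where
  "zmod_iter_sum n 0 X = {0}"
| "zmod_iter_sum n (Suc 0) X = X"
| "zmod_iter_sum n (Suc (Suc j)) X = zmod_sumset n (zmod_iter_sum n (Suc j) X) X"

definition star_C :: "nat \<Rightarrow> nat set \<Rightarrow> nat \<Rightarrow> nat set \<Rightarrow> nat set" where
  "star_C n C j A = zmod_sumset n (zmod_iter_sum n j A) (zmod_iter_sum n (j - 1) C)"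

definition C_sum_free :: "nat \<Rightarrow> nat set \<Rightarrow> nat \<Rightarrow> nat \<Rightarrow> nat set \<Rightarrow> bool" where
  "C_sum_free n C k l A \<longleftrightarrow> star_C n C k A \<inter> star_C n C l A = {}"

definition zmod_stab :: "nat \<Rightarrow> nat set \<Rightarrow> nat set" where
  "zmod_stab n X = {g \<in> {0..<n}. (\<lambda>x. (g + x) mod n) ` X = X}"

definition zmod_cyclic :: "nat \<Rightarrow> nat \<Rightarrow> nat set" where
  "zmod_cyclic n d = {(i * d) mod n | i. True}"

end

theory Submission
  imports Defs
begin

text \<open>
  Let K be the stabiliser of k *_C A and T_j = j *_C A, so that T_(j+1) = T_j + (A + C).
  The stabilisers of the sets T_j + K increase with j, hence all equal K for j \<le> k, and
  Kneser's theorem gives |T_(j+1) + K| \<ge> |T_j + K| + |A + C + K| - |K|. Since K does not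
  contain the subgroup generated by s, s \<notin> K, and A + C + K = V \<union> (s + V) with V = A + K
  contains a coset of K outside V; so |A + C + K| \<ge> |V| + |K| and |T_j + K| \<ge> j |V| \<ge> j |A|.
  Finally k *_C A is K-periodic, so it is disjoint from (l *_C A) + K, and the two sizes
  add up to at most n. Kneser's theorem itself is proved along the lines of DeVos, by
  induction via e-transforms and a lemma on |X| + |stab X| for unions of sets.
\<close>

lemma product_bounds_imp_sum_bound:
  fixes g a r b k d1 d2 :: nat
  assumes "g * a \<le> k * d2" "r * b \<le> k * d1"
    and "k \<le> g" "k \<le> a" "k \<le> r" "k \<le> b" "0 < k"
  shows "g + b \<le> d2 + k \<or> r + a \<le> d1 + k"
proof (rule ccontr)
  assume "\<not> ?thesis"
  then have h1: "d2 + k < g + b" and h2: "d1 + k < r + a"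
    by auto
  obtain a' b' where a': "a = k + a'" and b': "b = k + b'"
    using assms(4,6) by (metis le_add_diff_inverse)
  have "k * d2 < k * (g + b')"
    using h1 b' assms(7) by simp
  with assms(1) have "g * a < k * (g + b')"
    by linarith
  then have i1: "g * a' < k * b'"
    using a' by (simp add: algebra_simps)
  have "k * d1 < k * (r + a')"
    using h2 a' assms(7) by simp
  with assms(2) have "r * b < k * (r + a')"
    by linarith
  then have i2: "r * b' < k * a'"
    using b' by (simp add: algebra_simps)
  have "(g * a') * (r * b') < (k * b') * (k * a')"
  proof -
    have "0 < k * b'"
      using i1 by linarith
    then show ?thesis
      using mult_strict_mono[OF i1 i2] by simp
  qed
  moreover have "(k * b') * (k * a') \<le> (g * a') * (r * b')"
  proof -
    have "k * k \<le> g * r"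
      using assms(3,5) by (simp add: mult_le_mono)
    then have "(k * k) * (a' * b') \<le> (g * r) * (a' * b')"
      by (rule mult_right_mono) simp
    then show ?thesis
      by (simp add: algebra_simps)
  qed
  ultimately show False
    by simp
qed

lemma sum_bounds_if_product_bounds:
  fixes ga nga r nr k d1 d2 :: nat
  assumes prod: "ga * nr \<le> k * d2" "r * nga \<le> k * d1"
    and k: "0 < k" "k \<le> ga" "k \<le> nr" "r = 0 \<or> k \<le> r" "nga = 0 \<or> k \<le> nga"
  shows "ga + nga \<le> d2 + k \<or> r + nr \<le> d1 + k \<or> r + nr \<le> d2"
proof -
  consider "r = 0" | "nga = 0" | "k \<le> r" "k \<le> nga"
    using k(4,5) by blast
  then show ?thesis
  proof cases
    case 1
    have "k * nr \<le> k * d2"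
      using prod(1) mult_le_mono1[OF k(2)] le_trans by blast
    then show ?thesis
      using 1 k(1) by simp
  next
    case 2
    have "k * ga \<le> k * d2"
      using prod(1) mult_le_mono2[OF k(3)] by (metis le_trans mult.commute)
    then show ?thesis
      using 2 k(1) by simp
  next
    case 3
    then show ?thesis
      using product_bounds_imp_sum_bound[OF prod k(2,3) 3 k(1)] by blast
  qed
qed

lemma card_le_mult_if_fibres_le:
  assumes "finite B" "f ` A \<subseteq> B" "\<And>p. p \<in> B \<Longrightarrow> card {a \<in> A. f a = p} \<le> k"
  shows "card A \<le> k * card B"
proof -
  have "A = (\<Union>p\<in>B. {a \<in> A. f a = p})"
    using assms(2) by auto
  then have "card A \<le> (\<Sum>p\<in>B. card {a \<in> A. f a = p})"
    using card_UN_le[OF assms(1), of "\<lambda>p. {a \<in> A. f a = p}"] by simp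
  also have "\<dots> \<le> (\<Sum>p\<in>B. k)"
    by (rule sum_mono) (rule assms(3))
  also have "\<dots> = k * card B"
    by simp
  finally show ?thesis .
qed

lemma card_filter_add_card_filter_not:
  assumes "finite A"
  shows "card {x \<in> A. P x} + card {x \<in> A. \<not> P x} = card A"
proof -
  have "card A = card ({x \<in> A. P x} \<union> {x \<in> A. \<not> P x})"
    by (rule arg_cong[where f = card]) blast
  also have "\<dots> = card {x \<in> A. P x} + card {x \<in> A. \<not> P x}"
    by (rule card_Un_disjoint) (use assms in auto)
  finally show ?thesis
    by simp
qed

lemma zmod_iter_sum_nonempty: "X \<noteq> {} \<Longrightarrow> zmod_iter_sum n j X \<noteq> {}"
  by (induction n j X rule: zmod_iter_sum.induct) (auto simp: zmod_sumset_def)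

section \<open>Sumsets, translates and stabilisers in \<open>\<int>/n\<int>\<close>\<close>

definition zmod_shift :: "nat \<Rightarrow> nat \<Rightarrow> nat set \<Rightarrow> nat set" where
  "zmod_shift n g X = (\<lambda>x. (g + x) mod n) ` X"

locale zmod =
  fixes n :: nat
  assumes n_pos: "0 < n"
begin

abbreviation sumset :: "nat set \<Rightarrow> nat set \<Rightarrow> nat set"  (infixl "\<oplus>" 75)
  where "X \<oplus> Y \<equiv> zmod_sumset n X Y"

abbreviation stab :: "nat set \<Rightarrow> nat set"
  where "stab X \<equiv> zmod_stab n X"

abbreviation shift :: "nat \<Rightarrow> nat set \<Rightarrow> nat set"
  where "shift g X \<equiv> zmod_shift n g X"

text \<open>The additive inverse of a residue \<open>g < n\<close>; the outer \<open>mod\<close> makes \<open>neg 0 = 0\<close>.\<close>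
abbreviation neg :: "nat \<Rightarrow> nat"
  where "neg g \<equiv> (n - g) mod n"

lemma sumset_iff: "z \<in> X \<oplus> Y \<longleftrightarrow> (\<exists>x\<in>X. \<exists>y\<in>Y. z = (x + y) mod n)"
  by (auto simp: zmod_sumset_def)

lemma sumset_memI: "x \<in> X \<Longrightarrow> y \<in> Y \<Longrightarrow> (x + y) mod n \<in> X \<oplus> Y"
  by (auto simp: zmod_sumset_def)

lemma sumset_subset: "X \<oplus> Y \<subseteq> {0..<n}"
  using n_pos by (auto simp: zmod_sumset_def)

lemma finite_sumset: "finite (X \<oplus> Y)"
  using finite_subset[OF sumset_subset] by blast

lemma sumset_nonempty: "X \<noteq> {} \<Longrightarrow> Y \<noteq> {} \<Longrightarrow> X \<oplus> Y \<noteq> {}"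
  by (auto simp: zmod_sumset_def)

lemma sumset_mono: "X \<subseteq> X' \<Longrightarrow> Y \<subseteq> Y' \<Longrightarrow> X \<oplus> Y \<subseteq> X' \<oplus> Y'"
  by (auto simp: zmod_sumset_def)

lemma sumset_commute: "X \<oplus> Y = Y \<oplus> X"
  unfolding zmod_sumset_def by (metis add.commute)

lemma sumset_assoc: "X \<oplus> Y \<oplus> Z = X \<oplus> (Y \<oplus> Z)"
proof -
  have mod_assoc: "((x + y) mod n + z) mod n = (x + (y + z) mod n) mod n" for x y z
    by (simp add: mod_add_left_eq mod_add_right_eq add.assoc)
  show ?thesis
  proof (rule set_eqI)
    fix w
    show "w \<in> X \<oplus> Y \<oplus> Z \<longleftrightarrow> w \<in> X \<oplus> (Y \<oplus> Z)"
    proof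
      assume "w \<in> X \<oplus> Y \<oplus> Z"
      then obtain x y z where "x \<in> X" "y \<in> Y" "z \<in> Z" "w = ((x + y) mod n + z) mod n"
        by (auto simp: sumset_iff)
      then show "w \<in> X \<oplus> (Y \<oplus> Z)"
        unfolding mod_assoc by (auto intro!: sumset_memI)
    next
      assume "w \<in> X \<oplus> (Y \<oplus> Z)"
      then obtain x y z where "x \<in> X" "y \<in> Y" "z \<in> Z" "w = (x + (y + z) mod n) mod n"
        by (auto simp: sumset_iff)
      then show "w \<in> X \<oplus> Y \<oplus> Z"
        unfolding mod_assoc[symmetric] by (auto intro!: sumset_memI)
    qed
  qed
qed

lemma sumset_left_commute: "X \<oplus> (Y \<oplus> Z) = Y \<oplus> (X \<oplus> Z)"
  by (metis sumset_assoc sumset_commute)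

lemma sumset_Un_right: "X \<oplus> (Y \<union> Z) = X \<oplus> Y \<union> X \<oplus> Z"
  by (auto simp: zmod_sumset_def)

lemma sumset_singleton: "X \<oplus> {g} = shift g X"
  by (auto simp: zmod_sumset_def zmod_shift_def add.commute)

lemma sumset_zero: "X \<subseteq> {0..<n} \<Longrightarrow> X \<oplus> {0} = X"
  by (force simp: zmod_sumset_def)

lemma shift_mem: "x \<in> X \<Longrightarrow> (g + x) mod n \<in> shift g X"
  by (auto simp: zmod_shift_def)

lemma shift_subset: "shift g X \<subseteq> {0..<n}"
  using n_pos by (auto simp: zmod_shift_def)

lemma mod_add_neg_cancel:
  assumes "g \<le> n"
  shows "((x + g) mod n + neg g) mod n = x mod n"
proof -
  have "((x + g) mod n + neg g) mod n = (x + g + (n - g)) mod n"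
    by (simp only: mod_add_left_eq mod_add_right_eq)
  also have "x + g + (n - g) = x + n"
    using assms by simp
  finally show ?thesis
    by simp
qed

lemma inj_on_shift: "inj_on (\<lambda>x. (g + x) mod n) {0..<n}"
proof (rule inj_onI)
  fix x y assume "x \<in> {0..<n}" "y \<in> {0..<n}" and "(g + x) mod n = (g + y) mod n"
  then have "((x + g mod n) mod n + neg (g mod n)) mod n = ((y + g mod n) mod n + neg (g mod n)) mod n"
    by (simp add: add.commute mod_add_right_eq)
  with \<open>x \<in> {0..<n}\<close> \<open>y \<in> {0..<n}\<close> show "x = y"
    by (simp only: mod_add_neg_cancel[OF less_imp_le[OF mod_less_divisor[OF n_pos]]]) simp
qed

lemma card_shift: "X \<subseteq> {0..<n} \<Longrightarrow> card (shift g X) = card X"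
  unfolding zmod_shift_def by (rule card_image) (rule inj_on_subset[OF inj_on_shift])

lemma card_le_if_shift_subset:
  "X \<subseteq> {0..<n} \<Longrightarrow> finite Y \<Longrightarrow> shift g X \<subseteq> Y \<Longrightarrow> card X \<le> card Y"
  by (metis card_mono card_shift)

lemma card_le_card_sumset: "X \<subseteq> {0..<n} \<Longrightarrow> y \<in> Y \<Longrightarrow> card X \<le> card (X \<oplus> Y)"
  by (rule card_le_if_shift_subset[OF _ finite_sumset, of _ y])
     (use sumset_memI in \<open>auto simp: zmod_shift_def add.commute\<close>)

lemma stab_eq: "g \<in> stab X \<longleftrightarrow> g < n \<and> shift g X = X"
  by (auto simp: zmod_stab_def zmod_shift_def)

lemma stab_less: "g \<in> stab X \<Longrightarrow> g < n"
  by (simp add: stab_eq)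

lemma stab_subset: "stab X \<subseteq> {0..<n}"
  by (auto dest: stab_less)

lemma finite_stab: "finite (stab X)"
  using finite_subset[OF stab_subset] by blast

lemma stab_iff:
  assumes "X \<subseteq> {0..<n}"
  shows "g \<in> stab X \<longleftrightarrow> g < n \<and> shift g X \<subseteq> X"
proof -
  have "finite X"
    using assms finite_subset by blast
  then have "shift g X = X" if "shift g X \<subseteq> X"
    using card_subset_eq[OF _ that] card_shift[OF assms] by simp
  then show ?thesis
    unfolding stab_eq by auto
qed

lemma stab_mem: "g \<in> stab X \<Longrightarrow> x \<in> X \<Longrightarrow> (x + g) mod n \<in> X"
  unfolding stab_eq by (metis add.commute shift_mem)

lemma zero_in_stab: "X \<subseteq> {0..<n} \<Longrightarrow> 0 \<in> stab X"
  using n_pos by (force simp: stab_iff zmod_shift_def)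

lemma stab_add:
  assumes X: "X \<subseteq> {0..<n}" and g: "g \<in> stab X" and h: "h \<in> stab X"
  shows "(g + h) mod n \<in> stab X"
proof -
  have "((g + h) mod n + x) mod n \<in> X" if "x \<in> X" for x
  proof -
    have "((g + h) mod n + x) mod n = ((x + h) mod n + g) mod n"
      by (simp add: mod_add_left_eq mod_add_right_eq add_ac)
    then show ?thesis
      using stab_mem[OF g stab_mem[OF h that]] by simp
  qed
  then show ?thesis
    using n_pos by (auto simp: stab_iff[OF X] zmod_shift_def)
qed

lemma stab_neg:
  assumes X: "X \<subseteq> {0..<n}" and g: "g \<in> stab X"
  shows "neg g \<in> stab X"
proof -
  have "(neg g + x) mod n \<in> X" if "x \<in> X" for x
  proof -
    obtain x' where x': "x' \<in> X" "x = (g + x') mod n"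
      using g \<open>x \<in> X\<close> by (auto simp: stab_eq zmod_shift_def)
    have "(neg g + x) mod n = ((x' + g) mod n + neg g) mod n"
      by (simp add: x'(2) add.commute)
    also have "\<dots> = x'"
      using mod_add_neg_cancel[of g] stab_less[OF g] x'(1) X by auto
    finally show ?thesis
      using x'(1) by simp
  qed
  then show ?thesis
    using n_pos by (auto simp: stab_iff[OF X] zmod_shift_def)
qed

lemma stab_mem_iff:
  assumes X: "X \<subseteq> {0..<n}" and g: "g \<in> stab X" and x: "x < n"
  shows "(x + g) mod n \<in> X \<longleftrightarrow> x \<in> X"
proof
  assume "(x + g) mod n \<in> X"
  then have "((x + g) mod n + neg g) mod n \<in> X"
    using stab_mem[OF stab_neg[OF X g]] by blast
  then show "x \<in> X"
    using mod_add_neg_cancel[of g x] stab_less[OF g] x by simp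
qed (rule stab_mem[OF g])

lemma stab_mult:
  assumes X: "X \<subseteq> {0..<n}" and g: "g \<in> stab X"
  shows "(j * g) mod n \<in> stab X"
proof (induction j)
  case 0
  show ?case
    using zero_in_stab[OF X] by simp
next
  case (Suc j)
  have "(Suc j * g) mod n = ((j * g) mod n + g) mod n"
    by (simp add: mod_add_left_eq add.commute mod_add_right_eq)
  then show ?case
    using stab_add[OF X Suc g] by simp
qed

lemma card_stab_le:
  assumes X: "X \<subseteq> {0..<n}" and x: "x \<in> X"
  shows "card (stab X) \<le> card X"
proof (rule card_le_if_shift_subset[OF stab_subset])
  show "finite X"
    using X finite_subset by blast
  show "shift x (stab X) \<subseteq> X"
    using stab_mem x by (auto simp: zmod_shift_def add.commute)
qed

lemma stab_subset_stab_sumset: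
  assumes X: "X \<subseteq> {0..<n}"
  shows "stab X \<subseteq> stab (X \<oplus> Y)"
proof
  fix g assume g: "g \<in> stab X"
  have "(g + (x + y) mod n) mod n \<in> X \<oplus> Y" if "x \<in> X" "y \<in> Y" for x y
  proof -
    have "(g + (x + y) mod n) mod n = ((x + g) mod n + y) mod n"
      by (simp add: mod_add_left_eq mod_add_right_eq add_ac)
    then show ?thesis
      using sumset_memI[OF stab_mem[OF g that(1)] that(2)] by simp
  qed
  then show "g \<in> stab (X \<oplus> Y)"
    using stab_less[OF g] by (auto simp: stab_iff[OF sumset_subset] zmod_shift_def sumset_iff)
qed

lemma subset_sumset_stab:
  assumes "X \<subseteq> {0..<n}" "Z \<subseteq> {0..<n}"
  shows "X \<subseteq> X \<oplus> stab Z"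
proof
  fix x assume "x \<in> X"
  then show "x \<in> X \<oplus> stab Z"
    using sumset_memI[OF _ zero_in_stab[OF assms(2)], of x X] assms(1) by auto
qed

lemma sumset_stab_self: "X \<subseteq> {0..<n} \<Longrightarrow> X \<oplus> stab X = X"
  using subset_sumset_stab[of X X] stab_mem by (auto simp: sumset_iff)

lemma stab_sumset_stab_self: "Z \<subseteq> {0..<n} \<Longrightarrow> stab Z \<oplus> stab Z = stab Z"
  using subset_sumset_stab[OF stab_subset, of Z] stab_add by (auto simp: sumset_iff)

lemma sumset_stab_idem: "Z \<subseteq> {0..<n} \<Longrightarrow> X \<oplus> stab Z \<oplus> stab Z = X \<oplus> stab Z"
  by (simp add: sumset_assoc stab_sumset_stab_self)

lemma sumset_stab_distrib:
  "Z \<subseteq> {0..<n} \<Longrightarrow> X \<oplus> stab Z \<oplus> (Y \<oplus> stab Z) = X \<oplus> Y \<oplus> stab Z"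
  by (metis sumset_assoc sumset_left_commute stab_sumset_stab_self)

lemma stab_subset_stab_stab: "X \<subseteq> {0..<n} \<Longrightarrow> stab X \<subseteq> stab (stab X)"
  using stab_add stab_less by (auto simp: stab_iff[OF stab_subset] zmod_shift_def)

lemma stab_subset_stab_sumset_stab:
  "Z \<subseteq> {0..<n} \<Longrightarrow> stab Z \<subseteq> stab (X \<oplus> stab Z)"
  using stab_subset_stab_stab stab_subset_stab_sumset[OF stab_subset, of Z X]
  by (auto simp: sumset_commute)

lemma shift_cancel: "(g + u) mod n = (g + v) mod n \<Longrightarrow> u < n \<Longrightarrow> v < n \<Longrightarrow> u = v"
  by (rule inj_onD[OF inj_on_shift]) auto

section \<open>A lower bound for \<open>|X| + |stab X|\<close> on unions\<close>

lemma stab_Int_subset_stab_filter: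
  assumes Y: "Y \<subseteq> {0..<n}" and C: "C \<subseteq> {0..<n}"
  shows "stab Y \<inter> stab C \<subseteq> stab {y \<in> Y. (z + y) mod n \<in> C \<longleftrightarrow> b}"
    (is "_ \<subseteq> stab ?Y")
proof
  fix c assume c: "c \<in> stab Y \<inter> stab C"
  have "(y + c) mod n \<in> ?Y" if y: "y \<in> ?Y" for y
  proof -
    have "(z + (y + c) mod n) mod n = ((z + y) mod n + c) mod n"
      by (simp add: mod_add_left_eq mod_add_right_eq add.assoc)
    then have "(z + (y + c) mod n) mod n \<in> C \<longleftrightarrow> (z + y) mod n \<in> C"
      using stab_mem_iff[OF C, of c "(z + y) mod n"] c n_pos by simp
    then show ?thesis
      using y c stab_mem[of c Y y] by simp
  qed
  moreover have "?Y \<subseteq> {0..<n}"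
    using Y by blast
  ultimately show "c \<in> stab ?Y"
    using c stab_less by (auto simp: stab_iff zmod_shift_def add.commute)
qed

lemma add_neg_eq_if_sum_eq:
  assumes sum: "(x + a + b) mod n = (x + a0 + b0) mod n" and "a0 < n" "b < n"
  shows "(a + neg a0) mod n = (b0 + neg b) mod n"
proof (rule shift_cancel)
  have "(x + a0 + b + (a + neg a0) mod n) mod n = (x + a0 + b + (a + (n - a0))) mod n"
    by (simp add: mod_simps)
  also have "x + a0 + b + (a + (n - a0)) = x + a + b + n"
    using assms by simp
  also have "(x + a + b + n) mod n = (x + a0 + b0 + n) mod n"
    using sum by simp
  also have "x + a0 + b0 + n = x + a0 + b + (b0 + (n - b))"
    using assms by simp
  also have "(x + a0 + b + (b0 + (n - b))) mod n = (x + a0 + b + (b0 + neg b) mod n) mod n"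
    by (simp add: mod_simps)
  finally show "(x + a0 + b + (a + neg a0) mod n) mod n = (x + a0 + b + (b0 + neg b) mod n) mod n" .
qed (use n_pos in auto)

lemma card_fibre_le_card_stab_Int:
  assumes P: "P \<subseteq> {0..<n}" and Q: "Q \<subseteq> {0..<n}"
  shows "card {(a, b) \<in> stab P \<times> stab Q. (x + a + b) mod n = p} \<le> card (stab P \<inter> stab Q)"
    (is "card ?F \<le> card ?K")
proof (cases "?F = {}")
  case True
  then show ?thesis
    by (metis card.empty le0)
next
  case False
  then obtain a0 b0 where ab0: "a0 \<in> stab P" "b0 \<in> stab Q" "(x + a0 + b0) mod n = p"
    by auto
  define h where "h = (\<lambda>(a::nat, b::nat). (a + neg a0) mod n)"
  have "inj_on h ?F"
  proof (rule inj_onI)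
    fix u v assume "u \<in> ?F" "v \<in> ?F" "h u = h v"
    then obtain a b a' b' where uv: "u = (a, b)" "v = (a', b')" "a \<in> stab P" "a' \<in> stab P"
        "b \<in> stab Q" "b' \<in> stab Q" "(x + a + b) mod n = (x + a' + b') mod n"
        "(neg a0 + a) mod n = (neg a0 + a') mod n"
      by (auto simp: h_def add.commute)
    then have "a = a'"
      using shift_cancel stab_less by blast
    with uv have "b = b'"
      using shift_cancel[of "x + a" b b'] stab_less by (simp add: add.assoc)
    with \<open>a = a'\<close> uv show "u = v"
      by simp
  qed
  moreover have "h ` ?F \<subseteq> ?K"
  proof
    fix q assume "q \<in> h ` ?F"
    then obtain a b where ab: "a \<in> stab P" "b \<in> stab Q" "(x + a + b) mod n = p"
        and q: "q = (a + neg a0) mod n"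
      by (auto simp: h_def)
    have "q \<in> stab P"
      using stab_add[OF P ab(1) stab_neg[OF P ab0(1)]] q by (simp add: mod_add_right_eq)
    have "q = (b0 + neg b) mod n"
      using add_neg_eq_if_sum_eq[of x a b a0 b0] ab ab0 q stab_less by simp
    then have "q \<in> stab Q"
      using stab_add[OF Q ab0(2) stab_neg[OF Q ab(2)]] by (simp add: mod_add_right_eq)
    with \<open>q \<in> stab P\<close> show "q \<in> ?K"
      by simp
  qed
  ultimately show ?thesis
    by (rule card_inj_on_le) (simp add: finite_stab)
qed

text \<open>
  Every sum \<open>x + a + b\<close> with \<open>x + a \<in> Q\<close>, \<open>a \<in> stab P\<close>, \<open>b \<in> stab Q\<close> and \<open>x + b \<notin> P\<close> lies
  in \<open>Q - P\<close>, and each element of \<open>Q - P\<close> arises at most \<open>|stab P \<inter> stab Q|\<close> times.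
\<close>
lemma card_mult_le_card_stab_Int_diff:
  assumes P: "P \<subseteq> {0..<n}" and Q: "Q \<subseteq> {0..<n}" and x: "x < n"
  shows "card {l \<in> stab P. (x + l) mod n \<in> Q} * card {l \<in> stab Q. (x + l) mod n \<notin> P}
         \<le> card (stab P \<inter> stab Q) * card (Q - P)"
proof -
  define Ga where "Ga = {l \<in> stab P. (x + l) mod n \<in> Q}"
  define R where "R = {l \<in> stab Q. (x + l) mod n \<notin> P}"
  define f where "f = (\<lambda>(a, b). (x + a + b) mod n)"
  have "f ` (Ga \<times> R) \<subseteq> Q - P"
  proof
    fix p assume "p \<in> f ` (Ga \<times> R)"
    then obtain a b where ab: "a \<in> Ga" "b \<in> R" and p: "p = (x + a + b) mod n"
      by (auto simp: f_def)
    have "((x + a) mod n + b) mod n = p"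
      by (simp add: p mod_add_left_eq)
    then have "p \<in> Q"
      using stab_mem[of b Q "(x + a) mod n"] ab by (auto simp: Ga_def R_def)
    moreover have "((x + b) mod n + a) mod n = p"
      by (simp only: mod_add_left_eq p) (simp add: add_ac)
    then have "p \<notin> P"
      using stab_mem_iff[OF P, of a "(x + b) mod n"] ab n_pos by (auto simp: Ga_def R_def)
    ultimately show "p \<in> Q - P"
      by simp
  qed
  moreover have "card {ab \<in> Ga \<times> R. f ab = p} \<le> card (stab P \<inter> stab Q)" for p
  proof -
    have sub: "{ab \<in> Ga \<times> R. f ab = p} \<subseteq> {(a, b) \<in> stab P \<times> stab Q. (x + a + b) mod n = p}"
      by (auto simp: Ga_def R_def f_def)
    have fin: "finite {(a, b) \<in> stab P \<times> stab Q. (x + a + b) mod n = p}"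
      by (rule finite_subset[of _ "stab P \<times> stab Q"]) (auto simp: finite_stab)
    from card_mono[OF fin sub] card_fibre_le_card_stab_Int[OF P Q, of x p] show ?thesis
      by (rule le_trans)
  qed
  moreover have "finite (Q - P)"
    using Q finite_subset by auto
  ultimately have "card (Ga \<times> R) \<le> card (stab P \<inter> stab Q) * card (Q - P)"
    using card_le_mult_if_fibres_le[of "Q - P" f "Ga \<times> R"] by blast
  then show ?thesis
    by (simp add: card_cartesian_product Ga_def R_def)
qed

lemma card_stab_Int_le_card_filter:
  assumes X: "X \<subseteq> {0..<n}" and C: "C \<subseteq> {0..<n}"
    and l: "l \<in> stab X" "(z + l) mod n \<in> C \<longleftrightarrow> b"
  shows "card (stab X \<inter> stab C) \<le> card {l \<in> stab X. (z + l) mod n \<in> C \<longleftrightarrow> b}"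
    (is "_ \<le> card ?Y")
proof -
  have "stab X \<inter> stab C \<subseteq> stab (stab X) \<inter> stab C"
    using stab_subset_stab_stab[OF X] by blast
  also have "\<dots> \<subseteq> stab ?Y"
    by (rule stab_Int_subset_stab_filter[OF stab_subset C])
  finally have "card (stab X \<inter> stab C) \<le> card (stab ?Y)"
    by (rule card_mono[OF finite_stab])
  also have "\<dots> \<le> card ?Y"
    by (rule card_stab_le) (use l stab_subset in auto)
  finally show ?thesis .
qed

lemma card_stab_alternatives:
  assumes C1: "C1 \<subseteq> {0..<n}" and C2: "C2 \<subseteq> {0..<n}" and z: "z \<in> C2" "z \<notin> C1"
  defines "K \<equiv> stab C1 \<inter> stab C2"
  shows "card (stab C1) \<le> card (C2 - C1) + card K \<or> card (stab C2) \<le> card (C1 - C2) + card K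
         \<or> card (stab C2) \<le> card (C2 - C1)"
proof -
  define Ga where "Ga = {l \<in> stab C1. (z + l) mod n \<in> C2}"
  define NGa where "NGa = {l \<in> stab C1. (z + l) mod n \<notin> C2}"
  define R where "R = {l \<in> stab C2. (z + l) mod n \<in> C1}"
  define NR where "NR = {l \<in> stab C2. (z + l) mod n \<notin> C1}"
  define k where "k = card K"
  have zn: "z < n"
    using z C2 by auto
  have k_le_Ga: "k \<le> card Ga"
    using card_stab_Int_le_card_filter[OF C1 C2 zero_in_stab[OF C1], of z True] z zn
    by (simp add: k_def K_def Ga_def)
  have k_le_NR: "k \<le> card NR"
    using card_stab_Int_le_card_filter[OF C2 C1 zero_in_stab[OF C2], of z False] z zn
    by (simp add: k_def K_def NR_def Int_commute)
  have k_le_R: "card R = 0 \<or> k \<le> card R"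
  proof (cases "R = {}")
    case False
    then obtain l where "l \<in> R"
      by blast
    then show ?thesis
      using card_stab_Int_le_card_filter[OF C2 C1, of l z True] by (simp add: k_def K_def R_def Int_commute)
  qed simp
  have k_le_NGa: "card NGa = 0 \<or> k \<le> card NGa"
  proof (cases "NGa = {}")
    case False
    then obtain l where "l \<in> NGa"
      by blast
    then show ?thesis
      using card_stab_Int_le_card_filter[OF C1 C2, of l z False] by (simp add: k_def K_def NGa_def)
  qed simp
  have "0 < k"
    using card_gt_0_iff finite_stab zero_in_stab[OF C1] zero_in_stab[OF C2]
    unfolding k_def K_def by blast
  have card_L1: "card Ga + card NGa = card (stab C1)"
    unfolding Ga_def NGa_def by (rule card_filter_add_card_filter_not[OF finite_stab])
  have card_L2: "card R + card NR = card (stab C2)"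
    unfolding R_def NR_def by (rule card_filter_add_card_filter_not[OF finite_stab])
  have prod1: "card Ga * card NR \<le> k * card (C2 - C1)"
    using card_mult_le_card_stab_Int_diff[OF C1 C2 zn] by (simp add: Ga_def NR_def k_def K_def)
  have prod2: "card R * card NGa \<le> k * card (C1 - C2)"
    using card_mult_le_card_stab_Int_diff[OF C2 C1 zn]
    by (simp add: R_def NGa_def k_def K_def Int_commute)
  show ?thesis
    using sum_bounds_if_product_bounds[OF prod1 prod2 \<open>0 < k\<close> k_le_Ga k_le_NR k_le_R k_le_NGa]
    unfolding card_L1 card_L2 k_def .
qed

lemma card_add_card_stab_Un:
  assumes C1: "C1 \<subseteq> {0..<n}" and C2: "C2 \<subseteq> {0..<n}"
  shows "min (card C1 + card (stab C1)) (card C2 + card (stab C2))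
         \<le> card (C1 \<union> C2) + card (stab (C1 \<union> C2))"
proof (cases "C1 \<subseteq> C2 \<or> C2 \<subseteq> C1")
  case True
  then show ?thesis
    by (metis min.cobounded1 min.cobounded2 sup.absorb1 sup.absorb2)
next
  case False
  then obtain x y where x: "x \<in> C2" "x \<notin> C1" and y: "y \<in> C1" "y \<notin> C2"
    by blast
  define K where "K = stab C1 \<inter> stab C2"
  have U: "C1 \<union> C2 \<subseteq> {0..<n}"
    using C1 C2 by blast
  have "K \<subseteq> stab (C1 \<union> C2)"
  proof
    fix g assume g: "g \<in> K"
    have "(g + x) mod n \<in> C1 \<union> C2" if "x \<in> C1 \<union> C2" for x
      using that g stab_mem[of g C1 x] stab_mem[of g C2 x] by (auto simp: K_def add.commute)
    then show "g \<in> stab (C1 \<union> C2)"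
      using g stab_less by (auto simp: K_def stab_iff[OF U] zmod_shift_def)
  qed
  then have K_le: "card K \<le> card (stab (C1 \<union> C2))"
    by (rule card_mono[OF finite_stab])
  have fin: "finite C1" "finite C2"
    using C1 C2 finite_subset by auto
  have card_U1: "card (C1 \<union> C2) = card C1 + card (C2 - C1)"
    using card_Un_disjoint[of C1 "C2 - C1"] fin by (simp add: Un_Diff_cancel)
  have card_U2: "card (C1 \<union> C2) = card C2 + card (C1 - C2)"
    using card_Un_disjoint[of C2 "C1 - C2"] fin by (simp add: Un_Diff_cancel Un_commute)
  have "card (stab C1) \<le> card (C2 - C1) + card K \<or> card (stab C2) \<le> card (C1 - C2) + card K"
    using card_stab_alternatives[OF C1 C2 x] card_stab_alternatives[OF C2 C1 y]
    unfolding K_def by (simp add: Int_commute) linarith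
  then show ?thesis
    using card_U1 card_U2 K_le by linarith
qed

lemma card_add_card_stab_Union:
  assumes fin: "finite F" and ne: "F \<noteq> {}"
    and F: "\<And>C. C \<in> F \<Longrightarrow> C \<subseteq> {0..<n} \<and> m \<le> card C + card (stab C)"
  shows "m \<le> card (\<Union>F) + card (stab (\<Union>F))"
  using fin ne F
proof (induction F rule: finite_ne_induct)
  case (singleton C)
  then show ?case
    by simp
next
  case (insert C F)
  have "m \<le> min (card C + card (stab C)) (card (\<Union>F) + card (stab (\<Union>F)))"
    using insert by simp
  also have "\<dots> \<le> card (C \<union> \<Union>F) + card (stab (C \<union> \<Union>F))"
    by (rule card_add_card_stab_Un) (use insert.prems in blast)+
  finally show ?case
    by simp
qed

section \<open>Kneser's theorem\<close>

lemma sumset_stab_eq_if_subset: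
  assumes "X \<subseteq> {0..<n}" "Z \<subseteq> {0..<n}" "stab Z \<subseteq> stab X"
  shows "X \<oplus> stab Z = X"
  using subset_sumset_stab[OF assms(1,2)] sumset_mono[OF order_refl assms(3), of X]
    sumset_stab_self[OF assms(1)] by blast

lemma card_le_card_if_differences_in:
  assumes B: "B \<subseteq> {0..<n}" "b0 \<in> B" and H: "H \<subseteq> {0..<n}"
    and diff: "\<And>b. b \<in> B \<Longrightarrow> (b + neg b0) mod n \<in> H"
  shows "card B \<le> card H"
proof -
  have "B \<subseteq> shift b0 H"
  proof
    fix b assume b: "b \<in> B"
    have "(b0 + (b + neg b0) mod n) mod n = (b + b0 + (n - b0)) mod n"
      by (simp add: mod_simps add_ac)
    also have "b + b0 + (n - b0) = b + n"
      using B by auto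
    also have "(b + n) mod n = b"
      using b B by auto
    finally show "b \<in> shift b0 H"
      using shift_mem[OF diff[OF b], of b0] by simp
  qed
  then show ?thesis
    using card_mono[OF finite_subset[OF shift_subset]] card_shift[OF H] by (metis finite_atLeastLessThan)
qed

text \<open>The e-transform \<open>(A \<union> (g + B), B \<inter> (A - g))\<close> of DeVos' proof of Kneser's theorem.\<close>
definition etrans_union :: "nat \<Rightarrow> nat set \<Rightarrow> nat set \<Rightarrow> nat set" where
  "etrans_union g A B = A \<union> shift g B"

definition etrans_inter :: "nat \<Rightarrow> nat set \<Rightarrow> nat set \<Rightarrow> nat set" where
  "etrans_inter g A B = {b \<in> B. (g + b) mod n \<in> A}"

lemma etrans_sumset_subset: "etrans_union g A B \<oplus> etrans_inter g A B \<subseteq> A \<oplus> B"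
proof
  fix w assume "w \<in> etrans_union g A B \<oplus> etrans_inter g A B"
  then obtain a b where a: "a \<in> A \<union> shift g B" and b: "b \<in> B" "(g + b) mod n \<in> A"
    and w: "w = (a + b) mod n"
    by (auto simp: sumset_iff etrans_union_def etrans_inter_def)
  show "w \<in> A \<oplus> B"
  proof (cases "a \<in> A")
    case True
    then show ?thesis
      using sumset_memI[OF True b(1)] w by simp
  next
    case False
    then obtain b1 where b1: "b1 \<in> B" "a = (g + b1) mod n"
      using a by (auto simp: zmod_shift_def)
    have "w = ((g + b) mod n + b1) mod n"
      by (simp add: w b1(2) mod_simps add_ac)
    then show ?thesis
      using sumset_memI[OF b(2) b1(1)] by simp
  qed
qed

lemma card_etrans:
  assumes A: "A \<subseteq> {0..<n}" and B: "B \<subseteq> {0..<n}"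
  shows "card (etrans_union g A B) + card (etrans_inter g A B) = card A + card B"
proof -
  have "(\<lambda>b. (g + b) mod n) ` etrans_inter g A B = A \<inter> shift g B"
    by (auto simp: etrans_inter_def zmod_shift_def)
  moreover have "inj_on (\<lambda>b. (g + b) mod n) (etrans_inter g A B)"
    by (rule inj_on_subset[OF inj_on_shift]) (use B in \<open>auto simp: etrans_inter_def\<close>)
  ultimately have "card (etrans_inter g A B) = card (A \<inter> shift g B)"
    by (metis card_image)
  moreover have "card (etrans_union g A B) + card (A \<inter> shift g B) = card A + card (shift g B)"
    unfolding etrans_union_def
    by (rule card_Un_Int[symmetric]) (use finite_subset[OF A] finite_subset[OF shift_subset] in auto)
  ultimately show ?thesis
    using card_shift[OF B] by simp
qed

lemma etrans_cover:
  assumes A: "A \<subseteq> {0..<n}" and B: "B \<subseteq> {0..<n}" "b \<in> B" "b' \<in> B"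
    and b': "(b' + neg b) mod n \<notin> stab (A \<oplus> B)"
  shows "\<exists>g < n. b \<in> etrans_inter g A B \<and> etrans_inter g A B \<noteq> B"
proof (rule ccontr)
  assume no_g: "\<not> ?thesis"
  define d where "d = (b' + neg b) mod n"
  have "(d + a) mod n \<in> A" if a: "a \<in> A" for a
  proof -
    define g where "g = (a + neg b) mod n"
    have "(g + b) mod n = (a + b + (n - b)) mod n"
      by (simp add: g_def mod_simps add_ac)
    also have "a + b + (n - b) = a + n"
      using B by auto
    also have "(a + n) mod n = a"
      using a A by auto
    finally have "b \<in> etrans_inter g A B"
      using a B(2) by (simp add: etrans_inter_def)
    then have "etrans_inter g A B = B"
      using no_g n_pos by (auto simp: g_def)
    then have "(g + b') mod n \<in> A"
      using B(3) by (auto simp: etrans_inter_def)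
    moreover have "(g + b') mod n = (d + a) mod n"
      by (simp add: g_def d_def mod_simps add_ac)
    ultimately show ?thesis
      by simp
  qed
  then have "d \<in> stab A"
    using n_pos by (auto simp: stab_iff[OF A] zmod_shift_def d_def)
  then show False
    using stab_subset_stab_sumset[OF A, of B] b' by (auto simp: d_def)
qed

lemma Union_etrans_eq:
  assumes A: "A \<subseteq> {0..<n}" and B: "B \<subseteq> {0..<n}"
    and spread: "\<And>b. b \<in> B \<Longrightarrow> \<exists>b'\<in>B. (b' + neg b) mod n \<notin> stab (A \<oplus> B)"
  shows "(\<Union>g \<in> {g \<in> {0..<n}. etrans_inter g A B \<noteq> {} \<and> etrans_inter g A B \<noteq> B}.
          etrans_union g A B \<oplus> etrans_inter g A B) = A \<oplus> B"
    (is "\<Union>(?C ` ?Gs) = _")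
proof
  show "\<Union>(?C ` ?Gs) \<subseteq> A \<oplus> B"
    using etrans_sumset_subset by blast
  show "A \<oplus> B \<subseteq> \<Union>(?C ` ?Gs)"
  proof
    fix w assume "w \<in> A \<oplus> B"
    then obtain a b where ab: "a \<in> A" "b \<in> B" "w = (a + b) mod n"
      by (auto simp: sumset_iff)
    obtain b' where "b' \<in> B" "(b' + neg b) mod n \<notin> stab (A \<oplus> B)"
      using spread[OF ab(2)] by blast
    then obtain g where g: "g < n" "b \<in> etrans_inter g A B" "etrans_inter g A B \<noteq> B"
      using etrans_cover[OF A B ab(2)] by blast
    then have "g \<in> ?Gs"
      by auto
    have "w \<in> A \<oplus> etrans_inter g A B"
      using sumset_memI[OF ab(1) g(2)] ab(3) by simp
    also have "\<dots> \<subseteq> ?C g"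
      unfolding etrans_union_def by (rule sumset_mono) auto
    finally show "w \<in> \<Union>(?C ` ?Gs)"
      using \<open>g \<in> ?Gs\<close> by blast
  qed
qed

text \<open>Lexicographic in \<open>(|A + B|, |B + stab (A + B)|)\<close>, because the second entry is at most \<open>n\<close>.\<close>
definition kneser_measure :: "nat set \<Rightarrow> nat set \<Rightarrow> nat" where
  "kneser_measure A B = card (A \<oplus> B) * (n + 1) + card (B \<oplus> stab (A \<oplus> B))"

lemma kneser_measure_etrans_less:
  assumes A: "A \<subseteq> {0..<n}" and B: "B \<subseteq> {0..<n}"
    and per: "stab (A \<oplus> B) \<subseteq> stab A" "stab (A \<oplus> B) \<subseteq> stab B"
    and proper: "etrans_inter g A B \<noteq> B"
  shows "kneser_measure (etrans_union g A B) (etrans_inter g A B) < kneser_measure A B"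
proof -
  define S where "S = A \<oplus> B"
  define Bg where "Bg = etrans_inter g A B"
  define C where "C = etrans_union g A B \<oplus> Bg"
  have "C \<subseteq> S"
    unfolding C_def S_def Bg_def by (rule etrans_sumset_subset)
  have "finite S"
    unfolding S_def by (rule finite_sumset)
  have measure_AB: "kneser_measure A B = card S * (n + 1) + card B"
    using sumset_stab_eq_if_subset[OF B sumset_subset per(2)]
    by (simp add: kneser_measure_def S_def)
  show ?thesis
  proof (cases "card C < card S")
    case True
    have "card (Bg \<oplus> stab C) \<le> n"
      using card_mono[OF _ sumset_subset] by fastforce
    then have "kneser_measure (etrans_union g A B) Bg < (card C + 1) * (n + 1)"
      by (simp add: kneser_measure_def C_def)
    also have "\<dots> \<le> card S * (n + 1)"
      using True by (intro mult_right_mono) auto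
    finally show ?thesis
      by (simp add: measure_AB Bg_def)
  next
    case False
    then have "C = S"
      using card_subset_eq[OF \<open>finite S\<close> \<open>C \<subseteq> S\<close>] card_mono[OF \<open>finite S\<close> \<open>C \<subseteq> S\<close>]
      by linarith
    have "stab S \<subseteq> stab B \<inter> stab A"
      using per by (simp add: S_def)
    also have "\<dots> \<subseteq> stab {b \<in> B. (g + b) mod n \<in> A \<longleftrightarrow> True}"
      by (rule stab_Int_subset_stab_filter[OF B A])
    finally have "Bg \<oplus> stab S = Bg"
      using sumset_stab_eq_if_subset[of Bg S] B
      by (auto simp: Bg_def etrans_inter_def S_def sumset_subset)
    moreover have "card Bg < card B"
      using proper B finite_subset
      by (intro psubset_card_mono) (auto simp: Bg_def etrans_inter_def)
    moreover have "etrans_union g A B \<oplus> Bg = S"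
      using \<open>C = S\<close> by (simp add: C_def)
    ultimately show ?thesis
      unfolding measure_AB by (simp add: kneser_measure_def Bg_def)
  qed
qed

text \<open>
  For \<open>H\<close>-periodic \<open>A\<close>, \<open>B\<close>: either \<open>B\<close> lies in one coset of \<open>H\<close>, or the e-transforms whose
  \<open>B\<close>-part is proper and nonempty cover \<open>A + B\<close> and all satisfy the bound by induction.
\<close>
lemma kneser_step:
  assumes A: "A \<subseteq> {0..<n}" "A \<noteq> {}" and B: "B \<subseteq> {0..<n}" "B \<noteq> {}"
    and per: "stab (A \<oplus> B) \<subseteq> stab A" "stab (A \<oplus> B) \<subseteq> stab B"
    and IH: "\<And>A' B'. A' \<subseteq> {0..<n} \<Longrightarrow> A' \<noteq> {} \<Longrightarrow> B' \<subseteq> {0..<n} \<Longrightarrow> B' \<noteq> {} \<Longrightarrow>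
      kneser_measure A' B' < kneser_measure A B \<Longrightarrow>
      card A' + card B' \<le> card (A' \<oplus> B') + card (stab (A' \<oplus> B'))"
  shows "card A + card B \<le> card (A \<oplus> B) + card (stab (A \<oplus> B))"
proof (cases "\<exists>b0\<in>B. \<forall>b\<in>B. (b + neg b0) mod n \<in> stab (A \<oplus> B)")
  case True
  then obtain b0 where "b0 \<in> B" "\<And>b. b \<in> B \<Longrightarrow> (b + neg b0) mod n \<in> stab (A \<oplus> B)"
    by blast
  then have "card B \<le> card (stab (A \<oplus> B))"
    using card_le_card_if_differences_in[OF B(1)] stab_subset by blast
  moreover have "card A \<le> card (A \<oplus> B)"
    using card_le_card_sumset[OF A(1) \<open>b0 \<in> B\<close>] .
  ultimately show ?thesis
    by simp
next
  case False
  define C where "C g = etrans_union g A B \<oplus> etrans_inter g A B" for g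
  define Gs where "Gs = {g \<in> {0..<n}. etrans_inter g A B \<noteq> {} \<and> etrans_inter g A B \<noteq> B}"
  have union: "\<Union>(C ` Gs) = A \<oplus> B"
    unfolding C_def Gs_def by (rule Union_etrans_eq[OF A(1) B(1)]) (use False in blast)
  have "card A + card B \<le> card (C g) + card (stab (C g))" if "g \<in> Gs" for g
  proof -
    have "card A + card B = card (etrans_union g A B) + card (etrans_inter g A B)"
      using card_etrans[OF A(1) B(1)] by simp
    also have "\<dots> \<le> card (C g) + card (stab (C g))"
      unfolding C_def
    proof (rule IH)
      show "etrans_union g A B \<subseteq> {0..<n}" "etrans_union g A B \<noteq> {}"
        using A shift_subset by (auto simp: etrans_union_def)
      show "etrans_inter g A B \<subseteq> {0..<n}" "etrans_inter g A B \<noteq> {}"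
        using B that by (auto simp: etrans_inter_def Gs_def)
      show "kneser_measure (etrans_union g A B) (etrans_inter g A B) < kneser_measure A B"
        using kneser_measure_etrans_less[OF A(1) B(1) per] that by (simp add: Gs_def)
    qed
    finally show ?thesis .
  qed
  moreover have "C ` Gs \<noteq> {}"
    using union sumset_nonempty[OF A(2) B(2)] by auto
  ultimately have "card A + card B \<le> card (\<Union>(C ` Gs)) + card (stab (\<Union>(C ` Gs)))"
    using sumset_subset by (intro card_add_card_stab_Union) (auto simp: Gs_def C_def)
  then show ?thesis
    by (simp add: union)
qed

theorem kneser:
  assumes "A \<subseteq> {0..<n}" "A \<noteq> {}" "B \<subseteq> {0..<n}" "B \<noteq> {}"
  shows "card A + card B \<le> card (A \<oplus> B) + card (stab (A \<oplus> B))"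
  using assms
proof (induction "kneser_measure A B" arbitrary: A B rule: less_induct)
  case less
  define H where "H = stab (A \<oplus> B)"
  define A' where "A' = A \<oplus> H"
  define B' where "B' = B \<oplus> H"
  have sum: "A' \<oplus> B' = A \<oplus> B"
    using sumset_stab_distrib[OF sumset_subset] sumset_stab_self[OF sumset_subset]
    by (simp add: A'_def B'_def H_def)
  have measure_eq: "kneser_measure A' B' = kneser_measure A B"
    unfolding kneser_measure_def sum unfolding B'_def H_def
    by (simp add: sumset_stab_idem[OF sumset_subset])
  have "A \<subseteq> A'" "B \<subseteq> B'"
    unfolding A'_def B'_def H_def using less.prems subset_sumset_stab sumset_subset by auto
  then have le: "card A \<le> card A'" "card B \<le> card B'" and ne: "A' \<noteq> {}" "B' \<noteq> {}"
    using less.prems by (auto simp: A'_def B'_def intro!: card_mono[OF finite_sumset])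
  have per: "stab (A' \<oplus> B') \<subseteq> stab A'" "stab (A' \<oplus> B') \<subseteq> stab B'"
    unfolding sum unfolding A'_def B'_def H_def
    by (rule stab_subset_stab_sumset_stab[OF sumset_subset])+
  have "card A' + card B' \<le> card (A' \<oplus> B') + card (stab (A' \<oplus> B'))"
  proof (rule kneser_step[OF _ ne(1) _ ne(2) per])
    fix A2 B2 assume "A2 \<subseteq> {0..<n}" "A2 \<noteq> {}" "B2 \<subseteq> {0..<n}" "B2 \<noteq> {}"
      "kneser_measure A2 B2 < kneser_measure A' B'"
    then show "card A2 + card B2 \<le> card (A2 \<oplus> B2) + card (stab (A2 \<oplus> B2))"
      using less.hyps measure_eq by simp
  qed (simp_all add: A'_def B'_def sumset_subset)
  with le show ?case
    by (simp add: sum)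
qed

section \<open>Growth of iterated sums\<close>

lemma stab_chain:
  assumes T: "\<And>j. T j \<subseteq> {0..<n}" "\<And>j. T (Suc j) = T j \<oplus> W" and "j \<le> m"
  shows "stab (T j \<oplus> stab (T m)) = stab (T m)"
proof
  let ?K = "stab (T m)"
  have "stab (T i \<oplus> ?K) \<subseteq> stab (T (Suc i) \<oplus> ?K)" for i
  proof -
    have "T (Suc i) \<oplus> ?K = T i \<oplus> ?K \<oplus> W"
      by (simp add: T(2) sumset_assoc sumset_commute[of W])
    then show ?thesis
      using stab_subset_stab_sumset[OF sumset_subset] by simp
  qed
  then have "stab (T j \<oplus> ?K) \<subseteq> stab (T m \<oplus> ?K)"
    using lift_Suc_mono_le[of "\<lambda>i. stab (T i \<oplus> ?K)"] \<open>j \<le> m\<close> by blast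
  then show "stab (T j \<oplus> ?K) \<subseteq> ?K"
    by (simp add: sumset_stab_self[OF T(1)])
  show "?K \<subseteq> stab (T j \<oplus> ?K)"
    by (rule stab_subset_stab_sumset_stab[OF T(1)])
qed

lemma card_chain_ge:
  assumes T: "\<And>j. T j \<subseteq> {0..<n}" "\<And>j. T j \<noteq> {}" "\<And>j. T (Suc j) = T j \<oplus> W"
    and W: "W \<subseteq> {0..<n}" "W \<noteq> {}" and "j \<le> m"
  defines "K \<equiv> stab (T m)"
  shows "card (T 0 \<oplus> K) + j * card (W \<oplus> K) \<le> card (T j \<oplus> K) + j * card K"
  using \<open>j \<le> m\<close>
proof (induction j)
  case (Suc j)
  have "T j \<oplus> K \<oplus> (W \<oplus> K) = T (Suc j) \<oplus> K"
    using sumset_stab_distrib[OF T(1)] by (simp add: K_def T(3))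
  moreover have "stab (T (Suc j) \<oplus> K) = K"
    using stab_chain[of T W "Suc j" m, OF T(1,3) Suc.prems] by (simp add: K_def)
  moreover have "K \<noteq> {}"
    using zero_in_stab[OF T(1), of m] by (auto simp: K_def)
  then have "T j \<oplus> K \<noteq> {}" "W \<oplus> K \<noteq> {}"
    by (simp_all add: sumset_nonempty T(2) W(2))
  ultimately have "card (T j \<oplus> K) + card (W \<oplus> K) \<le> card (T (Suc j) \<oplus> K) + card K"
    using kneser[OF sumset_subset _ sumset_subset] by metis
  with Suc show ?case
    by simp
qed simp

lemma card_add_card_stab_le_Un_shift:
  assumes V: "V \<subseteq> {0..<n}" and s: "s < n" "s \<notin> stab V"
  shows "card V + card (stab V) \<le> card (V \<union> shift s V)"
proof -
  have "\<not> shift s V \<subseteq> V"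
    using s by (simp add: stab_iff[OF V])
  then obtain u where u: "u \<in> shift s V - V"
    by blast
  have "stab V \<subseteq> stab (shift s V) \<inter> stab V"
    using stab_subset_stab_sumset[OF V, of "{s}"] by (simp add: sumset_singleton)
  also have "\<dots> \<subseteq> stab {y \<in> shift s V. (0 + y) mod n \<in> V \<longleftrightarrow> False}"
    by (rule stab_Int_subset_stab_filter[OF shift_subset V])
  also have "{y \<in> shift s V. (0 + y) mod n \<in> V \<longleftrightarrow> False} = shift s V - V"
    using shift_subset[of s V] by auto
  finally have "card (stab V) \<le> card (stab (shift s V - V))"
    by (rule card_mono[OF finite_stab])
  also have "\<dots> \<le> card (shift s V - V)"
    by (rule card_stab_le[OF _ u]) (use shift_subset in blast)
  also have "card V + card (shift s V - V) = card (V \<union> shift s V)"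
    using card_Un_disjoint[of V "shift s V - V"] finite_subset[OF V] finite_subset[OF shift_subset]
    by auto
  finally show ?thesis
    by simp
qed

lemma sumset_stab_disjoint:
  assumes X: "X \<subseteq> {0..<n}" and Y: "Y \<subseteq> {0..<n}" and "X \<inter> Y = {}"
  shows "X \<inter> (Y \<oplus> stab X) = {}"
proof -
  have "(y + h) mod n \<notin> X" if "y \<in> Y" "h \<in> stab X" for y h
    using stab_mem_iff[OF X that(2), of y] that(1) Y \<open>X \<inter> Y = {}\<close> by fastforce
  then show ?thesis
    by (auto simp: sumset_iff)
qed

lemma card_add_card_le_if_disjoint:
  assumes "X \<subseteq> {0..<n}" "Y \<subseteq> {0..<n}" "X \<inter> Y = {}"
  shows "card X + card Y \<le> n"
proof -
  have "card X + card Y = card (X \<union> Y)"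
    using finite_subset[OF assms(1)] finite_subset[OF assms(2)] assms(3)
    by (subst card_Un_disjoint) auto
  also have "\<dots> \<le> card {0..<n}"
    using assms by (intro card_mono) auto
  finally show ?thesis
    by simp
qed

lemma zmod_iter_sum_Suc:
  "X \<subseteq> {0..<n} \<Longrightarrow> zmod_iter_sum n (Suc j) X = zmod_iter_sum n j X \<oplus> X"
  by (cases j) (simp_all add: sumset_commute[of "{0}"] sumset_zero)

lemma star_C_subset: "star_C n C j A \<subseteq> {0..<n}"
  by (simp add: star_C_def sumset_subset)

lemma star_C_nonempty: "A \<noteq> {} \<Longrightarrow> C \<noteq> {} \<Longrightarrow> star_C n C j A \<noteq> {}"
  by (simp add: star_C_def sumset_nonempty zmod_iter_sum_nonempty)

lemma star_C_one: "A \<subseteq> {0..<n} \<Longrightarrow> star_C n C 1 A = A"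
  by (simp add: star_C_def sumset_zero)

lemma star_C_Suc:
  assumes "A \<subseteq> {0..<n}" "C \<subseteq> {0..<n}" "1 \<le> j"
  shows "star_C n C (Suc j) A = star_C n C j A \<oplus> (A \<oplus> C)"
proof -
  obtain i where j: "j = Suc i"
    using assms(3) by (cases j) auto
  show ?thesis
    unfolding star_C_def j using assms(1,2)
    by (simp add: zmod_iter_sum_Suc del: zmod_iter_sum.simps)
       (simp add: sumset_assoc sumset_left_commute)
qed

lemma cyclic_subset_stab:
  assumes X: "X \<subseteq> {0..<n}" and "s \<noteq> 0" and s: "s mod n \<in> stab X"
  shows "zmod_cyclic n (gcd s n) \<subseteq> stab X"
proof
  fix w assume "w \<in> zmod_cyclic n (gcd s n)"
  then obtain i where w: "w = (i * gcd s n) mod n"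
    by (auto simp: zmod_cyclic_def)
  obtain x y where xy: "s * x = n * y + gcd s n"
    using bezout_nat[OF \<open>s \<noteq> 0\<close>] by blast
  have "(i * x * s) mod n = (n * (i * y) + i * gcd s n) mod n"
    using arg_cong[OF xy, of "\<lambda>t. (i * t) mod n"] by (simp add: algebra_simps)
  then have "w = (i * x * (s mod n)) mod n"
    by (simp add: w mod_mult_right_eq)
  then show "w \<in> stab X"
    using stab_mult[OF X s] by simp
qed

lemma card_star_C_ge:
  assumes A: "A \<subseteq> {0..<n}" "A \<noteq> {}" and s: "s < n" "s \<notin> stab (star_C n {0, s} k A)"
    and j: "1 \<le> j" "j \<le> k"
  defines "K \<equiv> stab (star_C n {0, s} k A)"
  shows "j * card (A \<oplus> K) \<le> card (star_C n {0, s} j A \<oplus> K)"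
proof -
  define C where "C = {0, s}"
  define T where "T i = star_C n C (Suc i) A" for i
  have C: "C \<subseteq> {0..<n}" "C \<noteq> {}"
    using s n_pos by (auto simp: C_def)
  have T: "T i \<subseteq> {0..<n}" "T i \<noteq> {}" "T (Suc i) = T i \<oplus> (A \<oplus> C)" for i
    using star_C_subset star_C_nonempty[OF A(2) C(2)] star_C_Suc[OF A(1) C(1)]
    by (simp_all add: T_def)
  have T0: "T 0 = A" and Tk: "T (k - 1) = star_C n C k A"
    using star_C_one[OF A(1)] j by (simp_all add: T_def)
  have stab_V: "stab (A \<oplus> K) = K"
    using stab_chain[of T "A \<oplus> C" 0 "k - 1", OF T(1,3), unfolded T0 Tk] by (simp add: K_def C_def)
  have "s \<notin> stab (A \<oplus> K)"
    using s(2) stab_V by (simp add: K_def)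
  from card_add_card_stab_le_Un_shift[OF sumset_subset s(1) this]
  have "card (A \<oplus> K) + card K \<le> card (A \<oplus> K \<union> shift s (A \<oplus> K))"
    by (simp only: stab_V)
  also have "A \<oplus> K \<union> shift s (A \<oplus> K) = A \<oplus> K \<oplus> ({0} \<union> {s})"
    by (simp only: sumset_Un_right sumset_zero[OF sumset_subset]) (simp only: sumset_singleton)
  also have "\<dots> = A \<oplus> C \<oplus> K"
    by (simp add: C_def sumset_assoc sumset_commute[of K] insert_commute)
  finally have W: "card (A \<oplus> K) + card K \<le> card (A \<oplus> C \<oplus> K)" .
  have "card (A \<oplus> K) + (j - 1) * card (A \<oplus> C \<oplus> K) \<le> card (T (j - 1) \<oplus> K) + (j - 1) * card K"
    using card_chain_ge[of T "A \<oplus> C" "j - 1" "k - 1", OF T sumset_subset _, unfolded T0 Tk]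
      sumset_nonempty[OF A(2) C(2)] j by (simp add: K_def C_def)
  moreover have "(j - 1) * (card (A \<oplus> K) + card K) \<le> (j - 1) * card (A \<oplus> C \<oplus> K)"
    using W by simp
  ultimately have "card (A \<oplus> K) + (j - 1) * card (A \<oplus> K) \<le> card (T (j - 1) \<oplus> K)"
    by (simp add: algebra_simps)
  moreover have "T (j - 1) = star_C n {0, s} j A"
    using j by (simp add: T_def C_def)
  ultimately show ?thesis
    using j by (simp add: algebra_simps)
qed

lemma mult_card_le_if_star_C_disjoint:
  assumes A: "A \<subseteq> {0..<n}" "A \<noteq> {}" and s: "s < n" and kl: "l \<le> k" "1 \<le> l"
    and disjoint: "star_C n {0, s} k A \<inter> star_C n {0, s} l A = {}"
    and not_period: "s \<notin> stab (star_C n {0, s} k A)"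
  shows "(k + l) * card A \<le> n"
proof -
  define T where "T j = star_C n {0, s} j A" for j
  define K where "K = stab (T k)"
  have grow: "j * card (A \<oplus> K) \<le> card (T j \<oplus> K)" if "1 \<le> j" "j \<le> k" for j
    using card_star_C_ge[OF A s not_period that] by (simp add: K_def T_def)
  have "T k \<oplus> K = T k"
    unfolding K_def T_def by (rule sumset_stab_self[OF star_C_subset])
  moreover have "card (T k) + card (T l \<oplus> K) \<le> n"
    using card_add_card_le_if_disjoint[OF star_C_subset sumset_subset]
      sumset_stab_disjoint[OF star_C_subset star_C_subset disjoint]
    by (simp add: K_def T_def)
  ultimately have "k * card (A \<oplus> K) + l * card (A \<oplus> K) \<le> n"
    using grow[of k] grow[of l] kl by fastforce
  moreover have "card A \<le> card (A \<oplus> K)"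
    using card_le_card_sumset[OF A(1) zero_in_stab[OF star_C_subset]] by (simp add: K_def T_def)
  ultimately show ?thesis
    by (metis add_mult_distrib mult_le_mono2 le_trans)
qed

end

theorem lemma4p2:
  fixes n k l s :: nat and A :: "nat set"
  assumes "n \<ge> 1" and "k > l" and "l \<ge> 1" and "s \<ge> 1"
    and "A \<subseteq> {0..<n}"
    and "C_sum_free n {0, s mod n} k l A"
    and "\<not> zmod_cyclic n (gcd s n) \<subseteq> zmod_stab n (star_C n {0, s mod n} k A)"
  shows "card A \<le> n div (k + l)"
proof -
  interpret zmod n
    using assms(1) by unfold_locales simp
  have "s mod n \<notin> stab (star_C n {0, s mod n} k A)"
    using cyclic_subset_stab[OF star_C_subset] assms(4,7) by (metis not_one_le_zero)
  then have "(k + l) * card A \<le> n" if "A \<noteq> {}"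
    using assms(2,6) n_pos
    by (intro mult_card_le_if_star_C_disjoint[OF assms(5) that _ _ assms(3)])
       (simp_all add: C_sum_free_def)
  then show ?thesis
    using assms(3) by (cases "A = {}") (simp_all add: less_eq_div_iff_mult_less_eq mult.commute)
qed

end
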